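(* Let $V(\tilde{\Lambda})$ be a finite-dimensional irreducible $gl(m|n+1)$-module with highest weight $\tilde\Lambda$, equipped with its non-degenerate invariant sesquilinear form $\langle\,,\,\rangle$ (described in the context). Let $V_0(\tilde\Lambda)$ be its maximal $\mathbb{Z}$-graded component and put $W(\tilde{\Lambda}) = U(K_-)V_0(\tilde{\Lambda})$. If $0 \neq v_+ \in V(\tilde{\Lambda})$ is an $L$-maximal weight vector, then $\langle v_+, W(\tilde{\Lambda})\rangle \neq (0)$.
   Context: Work over $\mathbb{C}$. Let $N=m+n+1$ and set the parity $(p)=0$ for $1\le p\le m$ and $(p)=1$ for $m<p\le N$. The Lie superalgebra $\hat L=gl(m|n+1)$ has homogeneous basis $E_{pq}$ ($1\le p,q\le N$) of parity $(p)+(q)$ with graded bracket $[E_{pq},E_{rs}]=\delta_{qr}E_{ps}-(-1)^{((p)+(q))((r)+(s))}\delta_{ps}E_{rq}$. It has the $\mathbb{Z}$-grading $\hat L=\hat L_-\oplus\hat L_0\oplus\hat L_+$ with $\hat L_0=gl(m)\oplus gl(n+1)$ (the even part), $\hat L_+=\mathrm{span}\{E_{pq}: p\le m<q\}$, $\hat L_-=\mathrm{span}\{E_{qp}: p\le m<q\}$. Let $L=gl(m|n)\oplus gl(1)$ be the subalgebra spanned by $E_{pq}$ ($p,q\le m+n$) and $E_{NN}$, with induced grading $L=L_-\oplus L_0\oplus L_+$, $L_0=gl(m)\oplus gl(n)\oplus gl(1)$, $L_\pm=\hat L_\pm\cap L$; put $K_+=\mathrm{span}\{E_{iN}\}_{i=1}^m$,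 $K_-=\mathrm{span}\{E_{Ni}\}_{i=1}^m$, so $\hat L_\pm=L_\pm\oplus K_\pm$. $V(\tilde\Lambda)$ admits a $\mathbb{Z}$-gradation $V(\tilde\Lambda)=\bigoplus_{k=-d}^0V_k(\tilde\Lambda)$ whose top component $V_0(\tilde\Lambda)$ (the maximal $\mathbb{Z}$-graded component) is the irreducible $\hat L_0$-module generated by the highest weight vector. $V(\tilde\Lambda)$ carries a (unique) non-degenerate sesquilinear form $\langle\,,\,\rangle$ with $\langle v,w\rangle=\overline{\langle w,v\rangle}$ and $\langle av,w\rangle=\langle v,a^\dagger w\rangle$ for all $a\in\hat L$, where $\dagger$ is the conjugation with $(E_{pq})^\dagger=E_{qp}$. An $L$-maximal weight vector is a weight vector (for the Cartan subalgebra spanned by the $E_{pp}$) annihilated by all $E_{pq}$ with $p<q\le m+n$. *)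

theory Defs
  imports "HOL-Analysis.Analysis"
begin

text \<open>Modules are modelled on \<open>complex^'d\<close> (any finite-dimensional complex space);
  the action of the basis element E_pq of gl(m|n+1) is the matrix \<open>\<rho> p q\<close>.\<close>

definition par :: "nat \<Rightarrow> nat \<Rightarrow> nat" where
  "par m p = (if p \<le> m then 0 else 1)"

definition idx :: "nat \<Rightarrow> nat \<Rightarrow> nat set" where
  "idx m n = {1..m+n+1}"

definition csubspace :: "(complex^'d) set \<Rightarrow> bool" where
  "csubspace S \<longleftrightarrow> 0 \<in> S \<and> (\<forall>x\<in>S. \<forall>y\<in>S. x + y \<in> S) \<and> (\<forall>c. \<forall>x\<in>S. c *s x \<in> S)"

definition is_rep :: "nat \<Rightarrow> nat \<Rightarrow> (nat \<Rightarrow> nat \<Rightarrow> complex^'d^'d) \<Rightarrow> bool" where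
  "is_rep m n \<rho> \<longleftrightarrow>
    (\<forall>p\<in>idx m n. \<forall>q\<in>idx m n. \<forall>r\<in>idx m n. \<forall>s\<in>idx m n. \<forall>x.
      let e = (-1::complex) ^ ((par m p + par m q) * (par m r + par m s)) in
      \<rho> p q *v (\<rho> r s *v x) - e *s (\<rho> r s *v (\<rho> p q *v x))
        = (if q = r then \<rho> p s *v x else 0) - e *s (if p = s then \<rho> r q *v x else 0))"

definition irreducible_rep :: "nat \<Rightarrow> nat \<Rightarrow> (nat \<Rightarrow> nat \<Rightarrow> complex^'d^'d) \<Rightarrow> bool" where
  "irreducible_rep m n \<rho> \<longleftrightarrow>
    (\<forall>S. csubspace S \<and> (\<forall>p\<in>idx m n. \<forall>q\<in>idx m n. \<forall>x\<in>S. \<rho> p q *v x \<in> S)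
        \<longrightarrow> S = {0} \<or> S = UNIV)"

definition highest_weight_vector ::
  "nat \<Rightarrow> nat \<Rightarrow> (nat \<Rightarrow> nat \<Rightarrow> complex^'d^'d) \<Rightarrow> (nat \<Rightarrow> complex) \<Rightarrow> complex^'d \<Rightarrow> bool" where
  "highest_weight_vector m n \<rho> \<Lambda> v0 \<longleftrightarrow> v0 \<noteq> 0 \<and>
     (\<forall>p\<in>idx m n. \<rho> p p *v v0 = \<Lambda> p *s v0) \<and>
     (\<forall>p\<in>idx m n. \<forall>q\<in>idx m n. p < q \<longrightarrow> \<rho> p q *v v0 = 0)"

text \<open>\<open>gen_span \<rho> G X\<close> = U(g_G) X, where g_G is spanned by the E_pq with (p,q) in G.\<close>
inductive_set gen_span :: "(nat \<Rightarrow> nat \<Rightarrow> complex^'d^'d) \<Rightarrow> (nat \<times> nat) set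
    \<Rightarrow> (complex^'d) set \<Rightarrow> (complex^'d) set"
  for \<rho> G X where
  base: "x \<in> X \<Longrightarrow> x \<in> gen_span \<rho> G X"
| zero: "0 \<in> gen_span \<rho> G X"
| add: "x \<in> gen_span \<rho> G X \<Longrightarrow> y \<in> gen_span \<rho> G X \<Longrightarrow> x + y \<in> gen_span \<rho> G X"
| smult: "x \<in> gen_span \<rho> G X \<Longrightarrow> c *s x \<in> gen_span \<rho> G X"
| act: "(p, q) \<in> G \<Longrightarrow> x \<in> gen_span \<rho> G X \<Longrightarrow> \<rho> p q *v x \<in> gen_span \<rho> G X"

text \<open>Even part \<open>L0hat = gl(m) + gl(n+1)\<close> and \<open>K_- = span{E_Ni}\<close>.\<close>
definition L0hat :: "nat \<Rightarrow> nat \<Rightarrow> (nat \<times> nat) set" where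
  "L0hat m n = {(p, q). p \<in> idx m n \<and> q \<in> idx m n \<and> par m p = par m q}"

definition Kminus :: "nat \<Rightarrow> nat \<Rightarrow> (nat \<times> nat) set" where
  "Kminus m n = {(m+n+1, i) | i. 1 \<le> i \<and> i \<le> m}"

text \<open>Top component \<open>V_0 = U(L0hat) v0\<close> and \<open>W = U(K_-) V_0\<close>.\<close>
definition V0 :: "nat \<Rightarrow> nat \<Rightarrow> (nat \<Rightarrow> nat \<Rightarrow> complex^'d^'d) \<Rightarrow> complex^'d \<Rightarrow> (complex^'d) set" where
  "V0 m n \<rho> v0 = gen_span \<rho> (L0hat m n) {v0}"

definition Wspace :: "nat \<Rightarrow> nat \<Rightarrow> (nat \<Rightarrow> nat \<Rightarrow> complex^'d^'d) \<Rightarrow> complex^'d \<Rightarrow> (complex^'d) set" where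
  "Wspace m n \<rho> v0 = gen_span \<rho> (Kminus m n) (V0 m n \<rho> v0)"

definition invariant_form :: "nat \<Rightarrow> nat \<Rightarrow> (nat \<Rightarrow> nat \<Rightarrow> complex^'d^'d)
    \<Rightarrow> (complex^'d \<Rightarrow> complex^'d \<Rightarrow> complex) \<Rightarrow> bool" where
  "invariant_form m n \<rho> B \<longleftrightarrow>
    (\<forall>x y z. B (x + y) z = B x z + B y z) \<and>
    (\<forall>c x z. B (c *s x) z = c * B x z) \<and>
    (\<forall>x y. B x y = cnj (B y x)) \<and>
    (\<forall>x. (\<forall>y. B x y = 0) \<longrightarrow> x = 0) \<and>
    (\<forall>p\<in>idx m n. \<forall>q\<in>idx m n. \<forall>x y. B (\<rho> p q *v x) y = B x (\<rho> q p *v y))"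

text \<open>L-maximal weight vector (L = gl(m|n) + gl(1)).\<close>
definition L_maximal_weight_vector ::
  "nat \<Rightarrow> nat \<Rightarrow> (nat \<Rightarrow> nat \<Rightarrow> complex^'d^'d) \<Rightarrow> complex^'d \<Rightarrow> bool" where
  "L_maximal_weight_vector m n \<rho> v \<longleftrightarrow>
     (\<exists>\<mu>. \<forall>p\<in>idx m n. \<rho> p p *v v = \<mu> p *s v) \<and>
     (\<forall>p q. 1 \<le> p \<and> p < q \<and> q \<le> m + n \<longrightarrow> \<rho> p q *v v = 0)"

end

theory Submission
  imports Defs
begin

text \<open>The space \<open>T = U(\<hat>L\<^sub>-) V\<^sub>0\<close> is stable under \<open>\<hat>L\<^sub>0\<close> and \<open>\<hat>L\<^sub>+\<close>
  (the latter because \<open>\<hat>L\<^sub>+\<close> kills \<open>V\<^sub>0\<close>), hence is the whole irreducible module.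
  Since \<open>\<hat>L\<^sub>- = L\<^sub>- \<oplus> K\<^sub>-\<close> and \<open>[K\<^sub>-, L\<^sub>-] = 0\<close>, the \<open>K\<^sub>-\<close>-factors can be moved to the right,
  so \<open>V = U(L\<^sub>-) W\<close>. Invariance of the form turns \<open>L\<^sub>-\<close> into the raising operators of \<open>L\<close>,
  which kill \<open>v\<^sub>+\<close>; thus \<open>v\<^sub>+ \<perp> W\<close> would give \<open>v\<^sub>+ \<perp> V\<close>, contradicting non-degeneracy.\<close>


lemma gen_span_diff:
  assumes "x \<in> gen_span \<rho> G X" "y \<in> gen_span \<rho> G X"
  shows "x - y \<in> gen_span \<rho> G X"
proof -
  have "x + (-1) *s y \<in> gen_span \<rho> G X"
    using assms by (intro gen_span.add gen_span.smult)
  then show ?thesis by (simp add: vec_eq_iff)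
qed

lemma gen_span_csubspace: "csubspace (gen_span \<rho> G X)"
  unfolding csubspace_def by (auto intro: gen_span.intros)

lemma rep_commutation:
  assumes "is_rep m n \<rho>" "p \<in> idx m n" "q \<in> idx m n" "r \<in> idx m n" "s \<in> idx m n"
  defines "e \<equiv> (-1::complex) ^ ((par m p + par m q) * (par m r + par m s))"
  shows "\<rho> p q *v (\<rho> r s *v x) = e *s (\<rho> r s *v (\<rho> p q *v x))
     + (if q = r then \<rho> p s *v x else 0) - e *s (if p = s then \<rho> r q *v x else 0)"
proof -
  have "\<rho> p q *v (\<rho> r s *v x) - e *s (\<rho> r s *v (\<rho> p q *v x))
     = (if q = r then \<rho> p s *v x else 0) - e *s (if p = s then \<rho> r q *v x else 0)"
    using assms unfolding is_rep_def Let_def by blast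
  then show ?thesis by (simp add: algebra_simps)
qed

text \<open>\<open>[g\<^sub>H, g\<^sub>G] \<subseteq> g\<^sub>K\<close>, read off from \<open>[E\<^sub>p\<^sub>q, E\<^sub>a\<^sub>b] = \<delta>\<^sub>q\<^sub>a E\<^sub>p\<^sub>b \<plusminus> \<delta>\<^sub>p\<^sub>b E\<^sub>a\<^sub>q\<close>.\<close>
definition brackets_within :: "(nat \<times> nat) set \<Rightarrow> (nat \<times> nat) set \<Rightarrow> (nat \<times> nat) set \<Rightarrow> bool" where
  "brackets_within H G K \<longleftrightarrow>
     (\<forall>(p, q)\<in>H. \<forall>(a, b)\<in>G. (q = a \<longrightarrow> (p, b) \<in> K) \<and> (p = b \<longrightarrow> (a, q) \<in> K))"

lemma gen_span_annihilated:
  assumes rep: "is_rep m n \<rho>"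
    and H: "H \<subseteq> idx m n \<times> idx m n" and G: "G \<subseteq> idx m n \<times> idx m n"
    and X: "\<And>p q x. (p, q) \<in> H \<Longrightarrow> x \<in> X \<Longrightarrow> \<rho> p q *v x = 0"
    and br: "brackets_within H G H"
    and x: "x \<in> gen_span \<rho> G X"
  shows "\<forall>(p, q)\<in>H. \<rho> p q *v x = 0"
  using x
proof (induction rule: gen_span.induct)
  case (act a b y)
  show ?case
  proof (intro ballI, clarify)
    fix p q assume pq: "(p, q) \<in> H"
    have "(q = a \<longrightarrow> (p, b) \<in> H) \<and> (p = b \<longrightarrow> (a, q) \<in> H)"
      using br pq act.hyps unfolding brackets_within_def by blast
    then have "\<rho> p q *v y = 0" "q = a \<Longrightarrow> \<rho> p b *v y = 0" "p = b \<Longrightarrow> \<rho> a q *v y = 0"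
      using act.IH pq by auto
    moreover have idx: "p \<in> idx m n" "q \<in> idx m n" "a \<in> idx m n" "b \<in> idx m n"
      using pq act.hyps H G by auto
    ultimately show "\<rho> p q *v (\<rho> a b *v y) = 0"
      unfolding rep_commutation[OF rep idx] by simp
  qed
qed (use X in \<open>fastforce simp: matrix_vector_right_distrib vector_scalar_commute\<close>)+

lemma gen_span_stable:
  assumes rep: "is_rep m n \<rho>"
    and H: "H \<subseteq> idx m n \<times> idx m n" and G: "G \<subseteq> idx m n \<times> idx m n"
    and X: "\<And>p q x. (p, q) \<in> H \<Longrightarrow> x \<in> X \<Longrightarrow> \<rho> p q *v x \<in> gen_span \<rho> G X"
    and br: "brackets_within H G (H \<union> G)"
    and x: "x \<in> gen_span \<rho> G X"
  shows "\<forall>(p, q)\<in>H. \<rho> p q *v x \<in> gen_span \<rho> G X"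
  using x
proof (induction rule: gen_span.induct)
  case (act a b y)
  show ?case
  proof (intro ballI, clarify)
    fix p q assume pq: "(p, q) \<in> H"
    have "(q = a \<longrightarrow> (p, b) \<in> H \<union> G) \<and> (p = b \<longrightarrow> (a, q) \<in> H \<union> G)"
      using br pq act.hyps unfolding brackets_within_def by blast
    then have "(if q = a then \<rho> p b *v y else 0) \<in> gen_span \<rho> G X"
      and "(if p = b then \<rho> a q *v y else 0) \<in> gen_span \<rho> G X"
      using act.IH act.hyps by (auto intro: gen_span.intros)
    moreover have "\<rho> a b *v (\<rho> p q *v y) \<in> gen_span \<rho> G X"
      using act pq by (blast intro: gen_span.act)
    moreover have idx: "p \<in> idx m n" "q \<in> idx m n" "a \<in> idx m n" "b \<in> idx m n"
      using pq act.hyps H G by auto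
    ultimately show "\<rho> p q *v (\<rho> a b *v y) \<in> gen_span \<rho> G X"
      unfolding rep_commutation[OF rep idx] by (intro gen_span_diff gen_span.add gen_span.smult)
  qed
qed (use X in \<open>auto simp: matrix_vector_right_distrib vector_scalar_commute intro: gen_span.intros\<close>)

lemma gen_span_Un_subset:
  assumes "\<And>p q x. (p, q) \<in> H \<Longrightarrow> x \<in> gen_span \<rho> G (gen_span \<rho> H X)
             \<Longrightarrow> \<rho> p q *v x \<in> gen_span \<rho> G (gen_span \<rho> H X)"
  shows "gen_span \<rho> (G \<union> H) X \<subseteq> gen_span \<rho> G (gen_span \<rho> H X)"
proof
  fix x assume "x \<in> gen_span \<rho> (G \<union> H) X"
  then show "x \<in> gen_span \<rho> G (gen_span \<rho> H X)"
    by induction (auto intro: gen_span.intros assms)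
qed

lemma irreducible_rep_gen_span_UNIV:
  assumes irr: "irreducible_rep m n \<rho>"
    and stable: "\<And>p q x. p \<in> idx m n \<Longrightarrow> q \<in> idx m n \<Longrightarrow> x \<in> gen_span \<rho> G X
                   \<Longrightarrow> \<rho> p q *v x \<in> gen_span \<rho> G X"
    and "v \<in> X" "v \<noteq> 0"
  shows "gen_span \<rho> G X = UNIV"
proof -
  have "gen_span \<rho> G X \<noteq> {0}"
    using assms(3,4) gen_span.base by blast
  then show ?thesis
    using irr gen_span_csubspace stable unfolding irreducible_rep_def by blast
qed


lemma invariant_form_right:
  assumes "invariant_form m n \<rho> B"
  shows "B v (x + y) = B v x + B v y" and "B v (c *s x) = cnj c * B v x" and "B v 0 = 0"
proof -
  have add: "\<And>x y z. B (x + y) z = B x z + B y z"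
    and scale: "\<And>c x z. B (c *s x) z = c * B x z"
    and herm: "\<And>x y. B x y = cnj (B y x)"
    using assms unfolding invariant_form_def by blast+
  have scale_right: "\<And>c x. B v (c *s x) = cnj c * B v x"
    using herm[of v] scale by (metis complex_cnj_mult)
  show "B v (x + y) = B v x + B v y"
    using herm[of v] add by (metis complex_cnj_add)
  show "B v (c *s x) = cnj c * B v x"
    by (rule scale_right)
  have "(0::complex) *s x = 0" by (simp add: vec_eq_iff)
  then show "B v 0 = 0"
    using scale_right[of 0 x] by simp
qed

lemma gen_span_orthogonal:
  assumes inv: "invariant_form m n \<rho> B"
    and G: "G \<subseteq> idx m n \<times> idx m n"
    and killed: "\<And>a b. (a, b) \<in> G \<Longrightarrow> \<rho> b a *v v = 0"
    and orth: "\<And>x. x \<in> X \<Longrightarrow> B v x = 0"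
    and x: "x \<in> gen_span \<rho> G X"
  shows "B v x = 0"
  using x
proof (induction rule: gen_span.induct)
  case (act a b y)
  have "B v (\<rho> a b *v y) = B (\<rho> b a *v v) y"
    using inv act.hyps G unfolding invariant_form_def by (metis SigmaD1 SigmaD2 subsetD)
  then show ?case
    using killed[OF act.hyps(1)] invariant_form_right(3)[OF inv]
    by (metis invariant_form_def inv complex_cnj_zero)
qed (use orth invariant_form_right[OF inv] in auto)


definition Lminus_hat :: "nat \<Rightarrow> nat \<Rightarrow> (nat \<times> nat) set" where
  "Lminus_hat m n = {(p, q). p \<in> idx m n \<and> q \<in> idx m n \<and> par m p = 1 \<and> par m q = 0}"

definition Lplus_hat :: "nat \<Rightarrow> nat \<Rightarrow> (nat \<times> nat) set" where
  "Lplus_hat m n = {(p, q). p \<in> idx m n \<and> q \<in> idx m n \<and> par m p = 0 \<and> par m q = 1}"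

definition Lminus :: "nat \<Rightarrow> nat \<Rightarrow> (nat \<times> nat) set" where
  "Lminus m n = {(p, q) \<in> Lminus_hat m n. p \<noteq> m + n + 1}"

lemma Lminus_hat_eq: "Lminus_hat m n = Lminus m n \<union> Kminus m n"
  unfolding Lminus_hat_def Lminus_def Kminus_def idx_def par_def by auto

lemma index_sets_subset:
  "L0hat m n \<subseteq> idx m n \<times> idx m n" "Lplus_hat m n \<subseteq> idx m n \<times> idx m n"
  "Lminus_hat m n \<subseteq> idx m n \<times> idx m n" "Lminus m n \<subseteq> idx m n \<times> idx m n"
  "Kminus m n \<subseteq> idx m n \<times> idx m n"
  unfolding L0hat_def Lplus_hat_def Lminus_hat_def Lminus_def Kminus_def idx_def by auto

lemma brackets_of_grading:
  "brackets_within (Lplus_hat m n) (L0hat m n) (Lplus_hat m n)"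
  "brackets_within (L0hat m n \<union> Lplus_hat m n) (Lminus_hat m n)
     ((L0hat m n \<union> Lplus_hat m n) \<union> Lminus_hat m n)"
  "brackets_within (Kminus m n) (Lminus m n) (Kminus m n \<union> Lminus m n)"
  unfolding brackets_within_def L0hat_def Lplus_hat_def Lminus_hat_def Lminus_def Kminus_def
    idx_def par_def
  by auto


lemma V0_annihilated:
  assumes rep: "is_rep m n \<rho>" and hw: "highest_weight_vector m n \<rho> \<Lambda> v0"
    and "x \<in> V0 m n \<rho> v0" "(p, q) \<in> Lplus_hat m n"
  shows "\<rho> p q *v x = 0"
proof -
  have "\<rho> p q *v v0 = 0" if "(p, q) \<in> Lplus_hat m n" for p q
    using hw that unfolding highest_weight_vector_def Lplus_hat_def par_def
    by (auto split: if_splits)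
  then show ?thesis
    using gen_span_annihilated[OF rep index_sets_subset(2,1) _ brackets_of_grading(1)] assms(3,4)
    unfolding V0_def by blast
qed

lemma Lminus_hat_span_V0_UNIV:
  assumes rep: "is_rep m n \<rho>" and irr: "irreducible_rep m n \<rho>"
    and hw: "highest_weight_vector m n \<rho> \<Lambda> v0"
  shows "gen_span \<rho> (Lminus_hat m n) (V0 m n \<rho> v0) = UNIV"
proof (rule irreducible_rep_gen_span_UNIV[OF irr])
  let ?T = "gen_span \<rho> (Lminus_hat m n) (V0 m n \<rho> v0)"
  have "\<rho> p q *v x \<in> ?T" if "(p, q) \<in> L0hat m n \<union> Lplus_hat m n" "x \<in> V0 m n \<rho> v0" for p q x
    using that V0_annihilated[OF rep hw] unfolding V0_def by (auto intro: gen_span.intros)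
  then have even_plus: "\<forall>(p, q)\<in>L0hat m n \<union> Lplus_hat m n. \<rho> p q *v x \<in> ?T" if "x \<in> ?T" for x
    using gen_span_stable[OF rep _ index_sets_subset(3) _ brackets_of_grading(2) that]
      index_sets_subset(1,2) by blast
  fix p q x
  assume "p \<in> idx m n" "q \<in> idx m n" and x: "x \<in> ?T"
  then have "(p, q) \<in> L0hat m n \<union> Lplus_hat m n \<or> (p, q) \<in> Lminus_hat m n"
    unfolding L0hat_def Lplus_hat_def Lminus_hat_def par_def by auto
  then show "\<rho> p q *v x \<in> ?T"
    using even_plus[OF x] x by (auto intro: gen_span.act)
next
  show "v0 \<in> V0 m n \<rho> v0" "v0 \<noteq> 0"
    using hw unfolding V0_def highest_weight_vector_def by (auto intro: gen_span.base)
qed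

lemma Lminus_span_Wspace_UNIV:
  assumes rep: "is_rep m n \<rho>" and irr: "irreducible_rep m n \<rho>"
    and hw: "highest_weight_vector m n \<rho> \<Lambda> v0"
  shows "gen_span \<rho> (Lminus m n) (Wspace m n \<rho> v0) = UNIV"
proof -
  let ?W = "Wspace m n \<rho> v0"
  have "\<rho> p q *v x \<in> gen_span \<rho> (Lminus m n) ?W" if "(p, q) \<in> Kminus m n" "x \<in> ?W" for p q x
    using that unfolding Wspace_def by (auto intro: gen_span.intros)
  then have "\<forall>(p, q)\<in>Kminus m n. \<rho> p q *v x \<in> gen_span \<rho> (Lminus m n) ?W"
    if "x \<in> gen_span \<rho> (Lminus m n) ?W" for x
    using gen_span_stable[OF rep index_sets_subset(5,4) _ brackets_of_grading(3) that] by blast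
  then have "gen_span \<rho> (Lminus m n \<union> Kminus m n) (V0 m n \<rho> v0) \<subseteq> gen_span \<rho> (Lminus m n) ?W"
    unfolding Wspace_def by (intro gen_span_Un_subset) blast
  then show ?thesis
    using Lminus_hat_span_V0_UNIV[OF rep irr hw] by (auto simp: Lminus_hat_eq)
qed

lemma L_maximal_orthogonal:
  assumes inv: "invariant_form m n \<rho> B" and max: "L_maximal_weight_vector m n \<rho> v"
    and orth: "\<forall>w\<in>Wspace m n \<rho> v0. B v w = 0"
    and x: "x \<in> gen_span \<rho> (Lminus m n) (Wspace m n \<rho> v0)"
  shows "B v x = 0"
proof (rule gen_span_orthogonal[OF inv index_sets_subset(4) _ _ x])
  fix a b assume "(a, b) \<in> Lminus m n"
  then have "1 \<le> b" "b < a" "a \<le> m + n"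
    unfolding Lminus_def Lminus_hat_def idx_def par_def by (auto split: if_splits)
  then show "\<rho> b a *v v = 0"
    using max unfolding L_maximal_weight_vector_def by blast
qed (use orth in blast)

theorem lemma1:
  fixes m n :: nat
    and \<rho> :: "nat \<Rightarrow> nat \<Rightarrow> complex^'d^'d"
    and \<Lambda> :: "nat \<Rightarrow> complex"
    and v0 vplus :: "complex^'d"
    and B :: "complex^'d \<Rightarrow> complex^'d \<Rightarrow> complex"
  assumes "is_rep m n \<rho>"
    and "irreducible_rep m n \<rho>"
    and "highest_weight_vector m n \<rho> \<Lambda> v0"
    and "invariant_form m n \<rho> B"
    and "vplus \<noteq> 0"
    and "L_maximal_weight_vector m n \<rho> vplus"
  shows "\<exists>w \<in> Wspace m n \<rho> v0. B vplus w \<noteq> 0"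
proof (rule ccontr)
  assume "\<not> ?thesis"
  then have "B vplus y = 0" for y
    using L_maximal_orthogonal[OF assms(4,6)] Lminus_span_Wspace_UNIV[OF assms(1-3)] by blast
  then have "vplus = 0"
    using assms(4) unfolding invariant_form_def by blast
  with assms(5) show False by simp
qed

end
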